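(* Let $T$ be a full binary tree of order $n$. Then $b(T)\le \lceil n^{1/2}\rceil$.
   Context: A full binary tree is a rooted tree in which every vertex has either $0$ or $2$ children. Burning process of a connected graph $G$: initially all vertices are unburned. In each round $r\ge 1$, one vertex $x_r$ that is unburned at the end of round $r-1$ is chosen as the source of round $r$; in round $r$ the source $x_r$ becomes burned, and so does every vertex that was unburned at the end of round $r-1$ and is adjacent to a vertex burned at the end of round $r-1$. Burned vertices stay burned. If all vertices are burned at the end of round $k$ (and not earlier), $(x_1,\dots,x_k)$ is called a burning sequence for $G$ of length $k$. The burning number $b(G)$ is the minimum length of a burning sequence for $G$. *)

theory Defs
  imports Complex_Main
begin

text \<open>burned V E xs r = set of vertices burned at the end of round r, when the
  source of round r+1 is xs ! r (rounds are numbered from 1 in the paper).\<close>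
fun burned :: "'a set \<Rightarrow> ('a \<Rightarrow> 'a \<Rightarrow> bool) \<Rightarrow> 'a list \<Rightarrow> nat \<Rightarrow> 'a set" where
  "burned V E xs 0 = {}"
| "burned V E xs (Suc r) =
     burned V E xs r \<union> {xs ! r} \<union> {v \<in> V. \<exists>u \<in> burned V E xs r. E u v}"

definition burning_seq :: "'a set \<Rightarrow> ('a \<Rightarrow> 'a \<Rightarrow> bool) \<Rightarrow> 'a list \<Rightarrow> bool" where
  "burning_seq V E xs \<longleftrightarrow>
     set xs \<subseteq> V \<and>
     (\<forall>r < length xs. xs ! r \<notin> burned V E xs r) \<and>
     burned V E xs (length xs) = V \<and>
     (\<forall>r < length xs. burned V E xs r \<noteq> V)"

definition burning_number :: "'a set \<Rightarrow> ('a \<Rightarrow> 'a \<Rightarrow> bool) \<Rightarrow> nat" where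
  "burning_number V E = (LEAST k. \<exists>xs. burning_seq V E xs \<and> length xs = k)"

text \<open>Shape of a full binary tree: every vertex has 0 or 2 children. Vertices are
  identified with root-to-vertex paths (lists of left/right choices).\<close>
datatype fbt = Leaf | Node fbt fbt

fun fbt_verts :: "fbt \<Rightarrow> bool list set" where
  "fbt_verts Leaf = {[]}"
| "fbt_verts (Node l r) = {[]} \<union> Cons False ` fbt_verts l \<union> Cons True ` fbt_verts r"

definition fbt_adj :: "bool list \<Rightarrow> bool list \<Rightarrow> bool" where
  "fbt_adj p q \<longleftrightarrow> (\<exists>b. q = p @ [b] \<or> p = q @ [b])"

end

theory Submission
  imports Defs "HOL-Library.Sublist"
begin

(* Centres c_0, ..., c_{k-1} whose balls of radii k-1, ..., 0 cover the
   vertex set give a burning sequence of length k: the fire lit at c_i in round i+1 covers its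
   ball by round k, and a source that is already burning is replaced by any unburned vertex.

   Such centres exist for every rooted binary tree with at most k(k+2)/2 vertices. By induction
   on k: near a deepest vertex there is a subtree that either has more than k vertices and lies
   in one ball of radius k-1, or has at least 2k vertices and lies in two balls of radii k-1 and
   k-2; deleting it leaves a rooted tree to which the induction hypothesis for k-1 or k-2
   applies.

   A full binary tree with n = 2m+1 vertices has m internal vertices, and m <= k(k+2)/2 for
   k = ceil(sqrt n) - 1. Centres for the internal vertices, with every radius enlarged by one,
   cover all leaves; one extra round with source the root handles the one-vertex tree. *)

section \<open>The path metric of the infinite binary tree\<close>

definition tree_dist :: "'a list \<Rightarrow> 'a list \<Rightarrow> nat" where
  "tree_dist x y = length x + length y - 2 * length (longest_common_prefix x y)"

lemma longest_common_prefix_append_same [simp]: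
  "longest_common_prefix (p @ xs) (p @ ys) = p @ longest_common_prefix xs ys"
  by (induction p) auto

lemma tree_dist_append_same [simp]: "tree_dist (p @ xs) (p @ ys) = tree_dist xs ys"
  by (simp add: tree_dist_def)

lemma tree_dist_Nil [simp]: "tree_dist [] y = length y"
  by (simp add: tree_dist_def)

lemma tree_dist_append_right [simp]: "tree_dist v (v @ z) = length z"
  using tree_dist_append_same[of v "[]" z] by simp

lemma tree_dist_append_left [simp]: "tree_dist (v @ z) v = length z"
  using tree_dist_append_same[of v z "[]"] by (simp add: tree_dist_def)

lemma tree_dist_Cons_same [simp]: "tree_dist (a # x) (a # y) = tree_dist x y"
  using tree_dist_append_same[of "[a]"] by simp

lemma tree_dist_fork: "a \<noteq> b \<Longrightarrow> tree_dist (a # x) (b # y) = length x + length y + 2"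
  by (simp add: tree_dist_def)

lemma tree_dist_snoc_le: "tree_dist c (y @ [b]) \<le> tree_dist c y + 1"
proof -
  let ?p = "longest_common_prefix c y" and ?q = "longest_common_prefix c (y @ [b])"
  have "prefix ?p (y @ [b])"
    using longest_common_prefix_prefix2[of c y] by simp
  then have "prefix ?p ?q"
    using longest_common_prefix_prefix1[of c y] by (rule longest_common_prefix_max_prefix[rotated])
  then have "length ?p \<le> length ?q" by (rule prefix_length_le)
  moreover have "length ?p \<le> length c" "length ?p \<le> length y"
    using longest_common_prefix_prefix1[of c y] longest_common_prefix_prefix2[of c y]
    by (simp_all add: prefix_length_le)
  ultimately show ?thesis by (simp add: tree_dist_def)
qed

lemma tree_dist_via_common_prefix:
  obtains p z1 z2 where "x = p @ z1" "y = p @ z2" "tree_dist x y = length z1 + length z2"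
proof -
  let ?p = "longest_common_prefix x y"
  obtain z1 z2 where z: "x = ?p @ z1" "y = ?p @ z2"
    using longest_common_prefix_prefix1 longest_common_prefix_prefix2 prefixE by metis
  have "tree_dist x y = length z1 + length z2"
    unfolding tree_dist_def using arg_cong[OF z(1), of length] arg_cong[OF z(2), of length] by simp
  with z that show ?thesis by blast
qed

lemma burned_append:
  "r \<le> length xs \<Longrightarrow> burned V E (xs @ ys) r = burned V E xs r"
  by (induction r) (auto simp: nth_append)

lemma burned_mono: "r \<le> r' \<Longrightarrow> burned V E xs r \<subseteq> burned V E xs r'"
  by (induction r' rule: dec_induct) auto

lemma burned_subset: "set xs \<subseteq> V \<Longrightarrow> r \<le> length xs \<Longrightarrow> burned V E xs r \<subseteq> V"
  by (induction r) auto

lemma burned_step: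
  "u \<in> burned V E xs r \<Longrightarrow> v \<in> V \<Longrightarrow> E u v \<Longrightarrow> v \<in> burned V E xs (Suc r)"
  by auto

definition burning_prefix :: "'a set \<Rightarrow> ('a \<Rightarrow> 'a \<Rightarrow> bool) \<Rightarrow> 'a list \<Rightarrow> bool" where
  "burning_prefix V E xs \<longleftrightarrow>
     set xs \<subseteq> V \<and> (\<forall>r < length xs. xs ! r \<notin> burned V E xs r \<and> burned V E xs r \<noteq> V)"

lemma burning_prefix_snoc:
  assumes "burning_prefix V E ys" and "y \<in> V - burned V E ys (length ys)"
  shows "burning_prefix V E (ys @ [y])"
  using assms burned_append[of _ ys V E "[y]"]
  by (fastforce simp: burning_prefix_def nth_append less_Suc_eq)

lemma burning_seq_iff:
  "burning_seq V E xs \<longleftrightarrow> burning_prefix V E xs \<and> burned V E xs (length xs) = V"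
  by (auto simp: burning_seq_def burning_prefix_def)

lemma burning_prefix_dominates:
  assumes "set xs \<subseteq> V" and "i \<le> length xs"
  shows "\<exists>ys. length ys \<le> i \<and> burning_prefix V E ys \<and> burned V E xs i \<subseteq> burned V E ys (length ys)"
  using assms(2)
proof (induction i)
  case 0
  show ?case by (intro exI[of _ "[]"]) (simp add: burning_prefix_def)
next
  case (Suc i)
  then obtain ys where ys: "length ys \<le> i" "burning_prefix V E ys"
    and dom: "burned V E xs i \<subseteq> burned V E ys (length ys)" by auto
  let ?B = "burned V E ys (length ys)"
  show ?case
  proof (cases "?B = V")
    case True
    have "burned V E xs (Suc i) \<subseteq> V" using burned_subset[OF assms(1) Suc.prems] .
    with ys True show ?thesis by (metis le_SucI)
  next
    case False
    have "?B \<subseteq> V"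
      using ys(2) burned_subset[of ys V] by (simp add: burning_prefix_def)
    with False obtain u where u: "u \<in> V - ?B" by blast
    have "xs ! i \<in> V" using assms(1) Suc.prems by auto
    define y where "y = (if xs ! i \<in> ?B then u else xs ! i)"
    have y: "y \<in> V - ?B" using u \<open>xs ! i \<in> V\<close> by (simp add: y_def)
    have "burned V E (ys @ [y]) (length ys) = ?B" by (simp add: burned_append)
    then have "burned V E (ys @ [y]) (length (ys @ [y])) = ?B \<union> {y} \<union> {v \<in> V. \<exists>u \<in> ?B. E u v}"
      by simp
    moreover have "xs ! i \<in> ?B \<union> {y}" by (simp add: y_def)
    ultimately have "burned V E xs (Suc i) \<subseteq> burned V E (ys @ [y]) (length (ys @ [y]))"
      using dom by auto
    with ys burning_prefix_snoc[OF ys(2) y] show ?thesis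
      by (intro exI[of _ "ys @ [y]"]) simp
  qed
qed

lemma burning_number_le:
  assumes "set xs \<subseteq> V" and "burned V E xs (length xs) = V"
  shows "burning_number V E \<le> length xs"
proof -
  obtain ys where ys: "length ys \<le> length xs" "burning_prefix V E ys"
    and "V \<subseteq> burned V E ys (length ys)"
    using burning_prefix_dominates[OF assms(1) le_refl, of E] assms(2) by auto
  moreover have "burned V E ys (length ys) \<subseteq> V"
    using ys(2) burned_subset[of ys V] by (simp add: burning_prefix_def)
  ultimately have "burning_seq V E ys" by (simp add: burning_seq_iff)
  then have "burning_number V E \<le> length ys"
    unfolding burning_number_def by (blast intro: Least_le)
  with ys(1) show ?thesis by simp
qed

section \<open>Rooted trees as prefix-closed sets of words\<close>

definition prefix_closed :: "'a list set \<Rightarrow> bool" where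
  "prefix_closed W \<longleftrightarrow> (\<forall>w\<in>W. \<forall>v. prefix v w \<longrightarrow> v \<in> W)"

lemma prefix_closedD: "prefix_closed W \<Longrightarrow> v @ z \<in> W \<Longrightarrow> v \<in> W"
  unfolding prefix_closed_def by (blast intro: prefixI)

definition subtree :: "'a list set \<Rightarrow> 'a list \<Rightarrow> 'a list set" where
  "subtree W v = {w \<in> W. prefix v w}"

lemma subtree_Nil [simp]: "subtree W [] = W"
  by (simp add: subtree_def)

lemma subtree_subset: "subtree W v \<subseteq> W"
  by (auto simp: subtree_def)

lemma in_subtree_self: "v \<in> W \<Longrightarrow> v \<in> subtree W v"
  by (simp add: subtree_def)

lemma tree_dist_in_subtree: "w \<in> subtree W v \<Longrightarrow> tree_dist v w + length v = length w"
  by (auto simp: subtree_def elim: prefixE)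

lemma subtree_eq_empty: "prefix_closed W \<Longrightarrow> v \<notin> W \<Longrightarrow> subtree W v = {}"
  by (auto simp: subtree_def prefix_closed_def)

lemma prefix_closed_Diff_subtree:
  "prefix_closed W \<Longrightarrow> prefix_closed (W - subtree W v)"
  by (auto simp: prefix_closed_def subtree_def dest: prefix_order.trans)

lemma subtree_split:
  fixes v :: "bool list"
  assumes "v \<in> W"
  shows "subtree W v = insert v (subtree W (v @ [a]) \<union> subtree W (v @ [\<not> a]))"
proof (intro equalityI subsetI)
  fix w assume "w \<in> subtree W v"
  then obtain z where w: "w \<in> W" "w = v @ z" by (auto simp: subtree_def elim: prefixE)
  show "w \<in> insert v (subtree W (v @ [a]) \<union> subtree W (v @ [\<not> a]))"
  proof (cases z)
    case Nil
    with w show ?thesis by simp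
  next
    case (Cons c z')
    with w have "w \<in> subtree W (v @ [c])" by (simp add: subtree_def)
    then show ?thesis by (cases "c = a") auto
  qed
qed (use assms in \<open>auto simp: subtree_def dest: append_prefixD\<close>)

lemma card_subtree:
  fixes v :: "bool list"
  assumes "finite W" and "v \<in> W"
  shows "card (subtree W v) = Suc (card (subtree W (v @ [a])) + card (subtree W (v @ [\<not> a])))"
proof -
  have "finite (subtree W u)" for u using finite_subset[OF subtree_subset assms(1)] .
  moreover have "subtree W (v @ [a]) \<inter> subtree W (v @ [\<not> a]) = {}"
    by (auto simp: subtree_def prefix_def)
  moreover have "v \<notin> subtree W (v @ [a]) \<union> subtree W (v @ [\<not> a])"
    by (auto simp: subtree_def prefix_def)
  ultimately show ?thesis by (simp add: subtree_split[OF assms(2), of a] card_Un_disjoint)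
qed

lemma card_subtree_gt:
  assumes "finite W" and "prefix_closed W" and "v @ z \<in> W"
  shows "length z < card (subtree W v)"
  using assms(3)
proof (induction z arbitrary: v)
  case Nil
  then have "v \<in> subtree W v" by (simp add: in_subtree_self)
  then show ?case using finite_subset[OF subtree_subset assms(1)] by (auto simp: card_gt_0_iff)
next
  case (Cons c z)
  have "length z < card (subtree W (v @ [c]))" using Cons by simp
  moreover have "subtree W (v @ [c]) \<subset> subtree W v"
  proof
    show "subtree W (v @ [c]) \<subseteq> subtree W v"
      by (auto simp: subtree_def dest: append_prefixD)
    have "v \<in> subtree W v" using prefix_closedD[OF assms(2) Cons.prems] by (rule in_subtree_self)
    moreover have "v \<notin> subtree W (v @ [c])" by (auto simp: subtree_def dest: prefix_length_le)
    ultimately show "subtree W (v @ [c]) \<noteq> subtree W v" by blast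
  qed
  then have "card (subtree W (v @ [c])) < card (subtree W v)"
    by (rule psubset_card_mono[OF finite_subset[OF subtree_subset assms(1)]])
  ultimately show ?case by simp
qed

section \<open>Burning a rooted tree from centres of decreasing radii\<close>

lemma burned_spreads_down:
  assumes "prefix_closed V" and "p @ z \<in> V" and "p \<in> burned V fbt_adj xs r"
  shows "p @ z \<in> burned V fbt_adj xs (r + length z)"
  using assms(2)
proof (induction z rule: rev_induct)
  case Nil
  then show ?case using assms(3) by simp
next
  case (snoc b z)
  have "p @ z \<in> V" using prefix_closedD[OF assms(1), of "p @ z" "[b]"] snoc.prems by simp
  then have "p @ z \<in> burned V fbt_adj xs (r + length z)" by (rule snoc.IH)
  moreover have "fbt_adj (p @ z) (p @ z @ [b])" by (simp add: fbt_adj_def)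
  ultimately have "p @ z @ [b] \<in> burned V fbt_adj xs (Suc (r + length z))"
    using burned_step snoc.prems by metis
  then show ?case by simp
qed

lemma burned_spreads_up:
  assumes "prefix_closed V" and "p @ z \<in> V" and "p @ z \<in> burned V fbt_adj xs r"
  shows "p \<in> burned V fbt_adj xs (r + length z)"
  using assms(2,3)
proof (induction z arbitrary: p r)
  case Nil
  then show ?case by simp
next
  case (Cons b z)
  have "(p @ [b]) @ z \<in> V" "(p @ [b]) @ z \<in> burned V fbt_adj xs r"
    using Cons.prems by simp_all
  then have "p @ [b] \<in> burned V fbt_adj xs (r + length z)" by (rule Cons.IH)
  moreover have "p \<in> V" using prefix_closedD[OF assms(1) Cons.prems(1)] .
  moreover have "fbt_adj (p @ [b]) p" by (simp add: fbt_adj_def)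
  ultimately have "p \<in> burned V fbt_adj xs (Suc (r + length z))" by (metis burned_step)
  then show ?case by simp
qed

lemma burned_spreads:
  assumes "prefix_closed V" and "x \<in> V" and "v \<in> V" and "x \<in> burned V fbt_adj xs r"
  shows "v \<in> burned V fbt_adj xs (r + tree_dist x v)"
proof -
  obtain p z1 z2 where x: "x = p @ z1" and v: "v = p @ z2"
    and dist: "tree_dist x v = length z1 + length z2"
    by (rule tree_dist_via_common_prefix)
  have "p \<in> burned V fbt_adj xs (r + length z1)"
    using burned_spreads_up[OF assms(1)] assms(2,4) x by blast
  then have "v \<in> burned V fbt_adj xs (r + length z1 + length z2)"
    using burned_spreads_down[OF assms(1)] assms(3) v by blast
  with dist show ?thesis by (simp add: add.assoc)
qed

text \<open>Centre \<open>cs ! i\<close> has radius \<open>length cs - 1 - i\<close>: lit in round \<open>i + 1\<close>, its fire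
  covers that ball by round \<open>length cs\<close>.\<close>
definition covers :: "'a list list \<Rightarrow> 'a list set \<Rightarrow> bool" where
  "covers cs W \<longleftrightarrow> (\<forall>w\<in>W. \<exists>i < length cs. tree_dist (cs ! i) w + i < length cs)"

lemma burned_if_covers:
  assumes "prefix_closed V" and "set cs \<subseteq> V" and "covers cs V"
  shows "burned V fbt_adj cs (length cs) = V"
proof
  show "burned V fbt_adj cs (length cs) \<subseteq> V" using burned_subset[OF assms(2) le_refl] .
next
  show "V \<subseteq> burned V fbt_adj cs (length cs)"
  proof
    fix v assume "v \<in> V"
    then obtain i where i: "i < length cs" "tree_dist (cs ! i) v + i < length cs"
      using assms(3) unfolding covers_def by blast
    have "cs ! i \<in> V" using assms(2) i(1) by auto
    moreover have "cs ! i \<in> burned V fbt_adj cs (Suc i)" by simp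
    ultimately have "v \<in> burned V fbt_adj cs (Suc i + tree_dist (cs ! i) v)"
      using burned_spreads[OF assms(1) _ \<open>v \<in> V\<close>] by blast
    moreover have "Suc i + tree_dist (cs ! i) v \<le> length cs" using i(2) by simp
    ultimately show "v \<in> burned V fbt_adj cs (length cs)" by (metis burned_mono subsetD)
  qed
qed

lemma burning_number_le_if_covers:
  assumes "prefix_closed V" and "set cs \<subseteq> V" and "covers cs V"
  shows "burning_number V fbt_adj \<le> length cs"
  using burning_number_le[OF assms(2) burned_if_covers[OF assms]] .

section \<open>Covering small binary trees by balls of decreasing radii\<close>

lemma covers_Cons:
  assumes "covers cs (W - R)" and "\<forall>w\<in>R. tree_dist x w \<le> length cs"
  shows "covers (x # cs) W"
  unfolding covers_def
proof
  fix w assume "w \<in> W"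
  show "\<exists>i < length (x # cs). tree_dist ((x # cs) ! i) w + i < length (x # cs)"
  proof (cases "w \<in> R")
    case True
    with assms(2) show ?thesis by (intro exI[of _ 0]) auto
  next
    case False
    with \<open>w \<in> W\<close> assms(1) obtain i where "i < length cs" "tree_dist (cs ! i) w + i < length cs"
      unfolding covers_def by blast
    then show ?thesis by (intro exI[of _ "Suc i"]) auto
  qed
qed

lemma covers_replicate_Nil: "\<forall>w\<in>W. length w < k \<Longrightarrow> covers (replicate k []) W"
  unfolding covers_def by (auto intro!: exI[of _ 0])

lemma covers_snoc_Nil:
  assumes "covers cs W" and "\<forall>v\<in>V. v \<noteq> [] \<longrightarrow> butlast v \<in> W"
  shows "covers (cs @ [[]]) V"
  unfolding covers_def
proof
  fix v assume "v \<in> V"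
  show "\<exists>i < length (cs @ [[]]). tree_dist ((cs @ [[]]) ! i) v + i < length (cs @ [[]])"
  proof (cases "v = []")
    case True
    then show ?thesis by (intro exI[of _ "length cs"]) simp
  next
    case False
    with \<open>v \<in> V\<close> assms obtain i
      where i: "i < length cs" "tree_dist (cs ! i) (butlast v) + i < length cs"
      unfolding covers_def by blast
    have "tree_dist (cs ! i) v \<le> tree_dist (cs ! i) (butlast v) + 1"
      using tree_dist_snoc_le[of "cs ! i" "butlast v" "last v"] False by simp
    with i show ?thesis by (intro exI[of _ i]) (auto simp: nth_append)
  qed
qed

text \<open>The root \<open>[]\<close> is admitted as a centre even when it is not in \<open>W\<close>, so that the empty
  set is coverable with every number of centres.\<close>
definition coverable :: "'a list set \<Rightarrow> nat \<Rightarrow> bool" where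
  "coverable W k \<longleftrightarrow> (\<exists>cs. length cs = k \<and> set cs \<subseteq> insert [] W \<and> covers cs W)"

definition one_ball_reducible :: "'a list set \<Rightarrow> nat \<Rightarrow> bool" where
  "one_ball_reducible W k \<longleftrightarrow>
     (\<exists>v. \<exists>x\<in>W. k < card (subtree W v) \<and> (\<forall>w\<in>subtree W v. tree_dist x w < k))"

definition two_ball_reducible :: "'a list set \<Rightarrow> nat \<Rightarrow> bool" where
  "two_ball_reducible W k \<longleftrightarrow>
     (\<exists>v. \<exists>x\<in>W. \<exists>y\<in>W. 2 * k \<le> card (subtree W v) \<and>
        (\<forall>w\<in>subtree W v. tree_dist x w < k \<or> tree_dist y w + 1 < k))"

lemma card_Diff_subtree:
  "finite W \<Longrightarrow> card (W - subtree W v) = card W - card (subtree W v)"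
  by (meson card_Diff_subset finite_subset subtree_subset)

lemma coverable_if_one_ball_reducible:
  fixes W :: "'a list set"
  assumes "one_ball_reducible W (Suc k)" and "finite W" and "prefix_closed W"
    and "2 * card W \<le> Suc k * (Suc k + 2)"
    and IH: "\<And>W' :: 'a list set. finite W' \<Longrightarrow> prefix_closed W' \<Longrightarrow>
      2 * card W' \<le> k * (k + 2) \<Longrightarrow> coverable W' k"
  shows "coverable W (Suc k)"
proof -
  obtain v x where x: "x \<in> W" and card: "Suc k < card (subtree W v)"
    and ball: "\<forall>w\<in>subtree W v. tree_dist x w < Suc k"
    using assms(1) unfolding one_ball_reducible_def by blast
  let ?W' = "W - subtree W v"
  have "2 * card ?W' \<le> k * (k + 2)"
    using card assms(4) card_Diff_subtree[OF assms(2), of v] by (simp add: algebra_simps)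
  then obtain cs where cs: "length cs = k" "set cs \<subseteq> insert [] ?W'" "covers cs ?W'"
    using IH[of ?W'] assms(2,3) prefix_closed_Diff_subtree unfolding coverable_def by blast
  have "covers (x # cs) W" using ball cs(1) by (intro covers_Cons[OF cs(3)]) auto
  with cs(1,2) x show ?thesis unfolding coverable_def by (intro exI[of _ "x # cs"]) auto
qed

lemma coverable_if_two_ball_reducible:
  fixes W :: "'a list set"
  assumes "two_ball_reducible W (Suc (Suc k))" and "finite W" and "prefix_closed W"
    and "2 * card W \<le> Suc (Suc k) * (Suc (Suc k) + 2)"
    and IH: "\<And>W' :: 'a list set. finite W' \<Longrightarrow> prefix_closed W' \<Longrightarrow>
      2 * card W' \<le> k * (k + 2) \<Longrightarrow> coverable W' k"
  shows "coverable W (Suc (Suc k))"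
proof -
  obtain v x y where xy: "x \<in> W" "y \<in> W" and card: "2 * Suc (Suc k) \<le> card (subtree W v)"
    and balls: "\<forall>w\<in>subtree W v. tree_dist x w < Suc (Suc k) \<or> tree_dist y w + 1 < Suc (Suc k)"
    using assms(1) unfolding two_ball_reducible_def by blast
  let ?R = "subtree W v"
  let ?R\<^sub>x = "{w \<in> ?R. tree_dist x w < Suc (Suc k)}"
  have "2 * card (W - ?R) \<le> k * (k + 2)"
    using card assms(4) card_Diff_subtree[OF assms(2), of v] by (simp add: algebra_simps)
  then obtain cs where cs: "length cs = k" "set cs \<subseteq> insert [] (W - ?R)" "covers cs (W - ?R)"
    using IH[of "W - ?R"] assms(2,3) prefix_closed_Diff_subtree unfolding coverable_def by blast
  have "W - ?R = (W - ?R\<^sub>x) - (?R - ?R\<^sub>x)" by blast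
  then have "covers (y # cs) (W - ?R\<^sub>x)"
    using cs balls covers_Cons[of cs "W - ?R\<^sub>x" "?R - ?R\<^sub>x" y] by fastforce
  moreover have "\<forall>w\<in>?R\<^sub>x. tree_dist x w \<le> length (y # cs)" using cs(1) by auto
  ultimately have "covers (x # y # cs) W" by (rule covers_Cons)
  with cs(1,2) xy show ?thesis
    unfolding coverable_def by (intro exI[of _ "x # y # cs"]) auto
qed

text \<open>\<open>d @ \<beta> # z\<close> is a deepest vertex and \<open>d\<close> its ancestor at distance \<open>k\<close>; the subtree
  of \<open>d @ [\<beta>]\<close> then lies in a ball of radius \<open>k - 1\<close>, and the case analysis is on how deep
  the subtree of the sibling \<open>d @ [\<not> \<beta>]\<close> reaches.\<close>

context
  fixes W :: "bool list set" and k :: nat and d z :: "bool list" and \<beta> :: bool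
  assumes finite_W: "finite W" and closed_W: "prefix_closed W"
    and card_W: "2 * card W \<le> k * (k + 2)" and two_le_k: "2 \<le> k"
    and deepest: "d @ \<beta> # z \<in> W" and length_z: "length z + 1 = k"
    and height: "\<forall>w\<in>W. length w \<le> length d + k"
begin

lemma deepest_in_subtree_parent: "d \<in> W" "d @ [\<beta>] \<in> W"
  using prefix_closedD[OF closed_W, of d "\<beta> # z"] prefix_closedD[OF closed_W, of "d @ [\<beta>]" z]
    deepest by simp_all

lemma subtree_deepest_child:
  "k \<le> card (subtree W (d @ [\<beta>]))" "\<forall>w\<in>subtree W (d @ [\<beta>]). tree_dist (d @ [\<beta>]) w < k"
proof -
  show "k \<le> card (subtree W (d @ [\<beta>]))"
    using card_subtree_gt[OF finite_W closed_W, of "d @ [\<beta>]" z] deepest length_z by simp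
  show "\<forall>w\<in>subtree W (d @ [\<beta>]). tree_dist (d @ [\<beta>]) w < k"
    using height tree_dist_in_subtree subtree_subset two_le_k by fastforce
qed

lemma tree_dist_deepest_child_sibling:
  "w \<in> subtree W (d @ [\<not> \<beta>]) \<Longrightarrow> tree_dist (d @ [\<beta>]) w = tree_dist (d @ [\<not> \<beta>]) w + 2"
  by (auto simp: subtree_def tree_dist_fork elim!: prefixE)

lemma subtree_parent_deepest:
  "subtree W d = insert d (subtree W (d @ [\<beta>]) \<union> subtree W (d @ [\<not> \<beta>]))"
  "card (subtree W d) = Suc (card (subtree W (d @ [\<beta>])) + card (subtree W (d @ [\<not> \<beta>])))"
  using subtree_split card_subtree finite_W deepest_in_subtree_parent(1) by blast+

lemma reducible_if_sibling_shallow: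
  assumes "\<forall>w\<in>subtree W (d @ [\<not> \<beta>]). length w < length d + k"
  shows "one_ball_reducible W k \<or> two_ball_reducible W k"
proof (cases "\<forall>w\<in>subtree W (d @ [\<not> \<beta>]). length w + 1 < length d + k")
  case True
  have "tree_dist (d @ [\<beta>]) w < k" if "w \<in> subtree W d" for w
    using that unfolding subtree_parent_deepest(1)
  proof (elim insertE UnE)
    assume "w \<in> subtree W (d @ [\<not> \<beta>])"
    with True show ?thesis
      using tree_dist_in_subtree tree_dist_deepest_child_sibling by fastforce
  qed (use subtree_deepest_child(2) two_le_k in auto)
  moreover have "k < card (subtree W d)"
    using subtree_deepest_child(1) subtree_parent_deepest(2) by simp
  ultimately have "one_ball_reducible W k"
    unfolding one_ball_reducible_def using deepest_in_subtree_parent(2) by blast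
  then show ?thesis ..
next
  case False
  with assms obtain w\<^sub>1 where w\<^sub>1: "w\<^sub>1 \<in> subtree W (d @ [\<not> \<beta>])" "length w\<^sub>1 + 1 = length d + k"
    by force
  then obtain z\<^sub>1 where z\<^sub>1: "(d @ [\<not> \<beta>]) @ z\<^sub>1 \<in> W" "length z\<^sub>1 + 2 = k"
    by (auto simp: subtree_def elim: prefixE)
  have "2 * k \<le> card (subtree W d)"
    using card_subtree_gt[OF finite_W closed_W z\<^sub>1(1)] z\<^sub>1(2)
      subtree_deepest_child(1) subtree_parent_deepest(2) by simp
  moreover have "tree_dist (d @ [\<beta>]) w < k \<or> tree_dist (d @ [\<not> \<beta>]) w + 1 < k"
    if "w \<in> subtree W d" for w
    using that unfolding subtree_parent_deepest(1)
  proof (elim insertE UnE)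
    assume "w \<in> subtree W (d @ [\<not> \<beta>])"
    with assms show ?thesis using tree_dist_in_subtree by fastforce
  qed (use subtree_deepest_child(2) two_le_k in auto)
  moreover have "d @ [\<not> \<beta>] \<in> W" using prefix_closedD[OF closed_W z\<^sub>1(1)] .
  ultimately have "two_ball_reducible W k"
    unfolding two_ball_reducible_def using deepest_in_subtree_parent(2) by blast
  then show ?thesis ..
qed

lemma sibling_child_reaching_bottom:
  assumes "e \<in> subtree W (d @ [\<not> \<beta>])" and "length e = length d + k"
  obtains \<gamma> where "d @ [\<not> \<beta>, \<gamma>] \<in> W" and "k \<le> Suc (card (subtree W (d @ [\<not> \<beta>, \<gamma>])))"
proof -
  obtain zs where zs: "e = d @ [\<not> \<beta>] @ zs" "e \<in> W"
    using assms(1) by (auto simp: subtree_def elim: prefixE)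
  with assms(2) two_le_k obtain \<gamma> z' where "zs = \<gamma> # z'" by (cases zs) auto
  with zs assms(2) have "(d @ [\<not> \<beta>, \<gamma>]) @ z' \<in> W" "length z' + 2 = k" by simp_all
  with that show ?thesis
    using prefix_closedD[OF closed_W] card_subtree_gt[OF finite_W closed_W] by fastforce
qed

lemma reducible_if_sibling_deep:
  assumes "e \<in> subtree W (d @ [\<not> \<beta>])" and "length e = length d + k"
  shows "one_ball_reducible W k \<or> two_ball_reducible W k"
proof -
  let ?s = "d @ [\<not> \<beta>]"
  obtain \<gamma> where "?s @ [\<gamma>] \<in> W" and card_child: "k \<le> Suc (card (subtree W (?s @ [\<gamma>])))"
    using sibling_child_reaching_bottom[OF assms] by auto
  then have "?s \<in> W" using prefix_closedD[OF closed_W] by blast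
  then have card_s: "k + card (subtree W (?s @ [\<not> \<gamma>])) \<le> card (subtree W ?s)"
    using card_subtree[OF finite_W, of ?s \<gamma>] card_child by simp
  show ?thesis
  proof (cases "?s @ [\<not> \<gamma>] \<in> W")
    case True
    then have "0 < card (subtree W (?s @ [\<not> \<gamma>]))"
      using in_subtree_self finite_subset[OF subtree_subset finite_W]
      by (fastforce simp: card_gt_0_iff)
    then have "k < card (subtree W ?s)" using card_s by simp
    moreover have "\<forall>w\<in>subtree W ?s. tree_dist ?s w < k"
      using height tree_dist_in_subtree subtree_subset two_le_k by fastforce
    ultimately have "one_ball_reducible W k"
      unfolding one_ball_reducible_def using \<open>?s \<in> W\<close> by blast
    then show ?thesis ..
  next
    case False
    then have no_sibling: "subtree W (?s @ [\<not> \<gamma>]) = {}" by (rule subtree_eq_empty[OF closed_W])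
    then have "2 * k < card (subtree W d)"
      using card_s subtree_deepest_child(1) subtree_parent_deepest(2) by simp
    moreover have "card (subtree W d) \<le> card W" by (rule card_mono[OF finite_W subtree_subset])
    ultimately have "3 \<le> k" using card_W two_le_k by (cases "k = 2") auto
    have "tree_dist (d @ [\<beta>]) w < k \<or> tree_dist (?s @ [\<gamma>]) w + 1 < k"
      if "w \<in> subtree W d" for w
      using that
      unfolding subtree_parent_deepest(1) subtree_split[OF \<open>?s \<in> W\<close>, of \<gamma>] no_sibling
    proof (elim insertE UnE)
      assume "w \<in> subtree W (?s @ [\<gamma>])"
      then show ?thesis using height tree_dist_in_subtree subtree_subset by fastforce
    qed (use subtree_deepest_child(2) \<open>3 \<le> k\<close> in \<open>auto simp: tree_dist_fork\<close>)
    with \<open>2 * k < card (subtree W d)\<close> have "two_ball_reducible W k"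
      unfolding two_ball_reducible_def
      using deepest_in_subtree_parent(2) \<open>?s @ [\<gamma>] \<in> W\<close> by (blast intro: less_imp_le)
    then show ?thesis ..
  qed
qed

lemma reducible_at_deepest_vertex: "one_ball_reducible W k \<or> two_ball_reducible W k"
proof (cases "\<forall>w\<in>subtree W (d @ [\<not> \<beta>]). length w < length d + k")
  case True
  then show ?thesis by (rule reducible_if_sibling_shallow)
next
  case False
  then obtain e where "e \<in> subtree W (d @ [\<not> \<beta>])" "length e = length d + k"
    using height subtree_subset by (meson le_neq_implies_less not_less subsetD)
  then show ?thesis by (rule reducible_if_sibling_deep)
qed

end

lemma reducible_if_deep:
  fixes W :: "bool list set"
  assumes "finite W" and "prefix_closed W" and "2 * card W \<le> k * (k + 2)" and "2 \<le> k"
    and "b \<in> W" and "k \<le> length b" and "\<forall>w\<in>W. length w \<le> length b"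
  shows "one_ball_reducible W k \<or> two_ball_reducible W k"
proof -
  let ?p = "length b - k"
  have "?p < length b" using assms(4,6) by simp
  then have "take ?p b @ b ! ?p # drop (Suc ?p) b \<in> W"
    using assms(5) by (simp add: id_take_nth_drop[symmetric])
  moreover have "length (drop (Suc ?p) b) + 1 = k" "length (take ?p b) + k = length b"
    using \<open>?p < length b\<close> assms(6) by simp_all
  ultimately show ?thesis using reducible_at_deepest_vertex[OF assms(1-4)] assms(7) by simp
qed

theorem coverable_if_card_le:
  fixes W :: "bool list set"
  assumes "finite W" and "prefix_closed W" and "2 * card W \<le> k * (k + 2)"
  shows "coverable W k"
  using assms
proof (induction k arbitrary: W rule: less_induct)
  case (less k W)
  show ?case
  proof (cases "\<forall>w\<in>W. length w < k")
    case True
    then show ?thesis unfolding coverable_def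
      by (intro exI[of _ "replicate k []"]) (auto simp: covers_replicate_Nil)
  next
    case False
    then obtain w where w: "w \<in> W" "k \<le> length w" by (auto simp: not_less)
    let ?L = "Max (length ` W)"
    have "?L \<in> length ` W" using less.prems(1) w(1) by (intro Max_in) auto
    then obtain b where b: "b \<in> W" "length b = ?L" by auto
    have height: "\<forall>w\<in>W. length w \<le> length b" using b(2) less.prems(1) by simp
    have "k < card W"
      using card_subtree_gt[OF less.prems(1,2), of "[]" w] w by simp
    with less.prems(3) have "2 \<le> k" by (cases "k \<le> 1") (auto simp: le_Suc_eq)
    then obtain k' where k: "k = Suc (Suc k')" by (metis add_2_eq_Suc le_Suc_ex)
    have "one_ball_reducible W k \<or> two_ball_reducible W k"
      using reducible_if_deep[OF less.prems \<open>2 \<le> k\<close> b(1) _ height] w height by force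
    then show ?thesis
    proof
      assume "one_ball_reducible W k"
      then show ?thesis unfolding k
        by (rule coverable_if_one_ball_reducible[OF _ less.prems(1,2)])
          (use less.prems(3) less.IH[of "Suc k'"] k in auto)
    next
      assume "two_ball_reducible W k"
      then show ?thesis unfolding k
        by (rule coverable_if_two_ball_reducible[OF _ less.prems(1,2)])
          (use less.prems(3) less.IH[of k'] k in auto)
    qed
  qed
qed

fun fbt_internal :: "fbt \<Rightarrow> bool list set" where
  "fbt_internal Leaf = {}"
| "fbt_internal (Node l r) = {[]} \<union> Cons False ` fbt_internal l \<union> Cons True ` fbt_internal r"

lemma prefix_closed_Node:
  "prefix_closed A \<Longrightarrow> prefix_closed B \<Longrightarrow>
    prefix_closed (insert [] (Cons False ` A \<union> Cons True ` B))"
  by (auto simp: prefix_closed_def prefix_Cons)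

lemma card_Node:
  assumes "finite A" and "finite B"
  shows "card (insert [] (Cons False ` A \<union> Cons True ` B)) = Suc (card A + card B)"
proof -
  have "card (Cons False ` A \<union> Cons True ` B) = card A + card B"
    using assms by (subst card_Un_disjoint) (auto simp: card_image)
  then show ?thesis using assms by (auto simp: card_insert_if)
qed

lemma finite_fbt_verts: "finite (fbt_verts T)"
  by (induction T) auto

lemma finite_fbt_internal: "finite (fbt_internal T)"
  by (induction T) auto

lemma prefix_closed_fbt_verts: "prefix_closed (fbt_verts T)"
  by (induction T) (simp_all add: prefix_closed_Node, simp add: prefix_closed_def)

lemma prefix_closed_fbt_internal: "prefix_closed (fbt_internal T)"
  by (induction T) (simp_all add: prefix_closed_Node, simp add: prefix_closed_def)

lemma card_fbt_verts: "card (fbt_verts T) = 2 * card (fbt_internal T) + 1"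
  by (induction T) (simp_all add: card_Node finite_fbt_verts finite_fbt_internal)

lemma Nil_in_fbt_verts: "[] \<in> fbt_verts T"
  by (cases T) auto

lemma fbt_internal_subset_verts: "fbt_internal T \<subseteq> fbt_verts T"
  by (induction T) auto

lemma butlast_in_fbt_internal: "v \<in> fbt_verts T \<Longrightarrow> v \<noteq> [] \<Longrightarrow> butlast v \<in> fbt_internal T"
  by (induction T arbitrary: v) (auto split: if_splits)

lemma le_ceiling_sqrt_squared: "n \<le> (nat \<lceil>sqrt (real n)\<rceil>)\<^sup>2"
proof -
  have "real n = (sqrt (real n))\<^sup>2" by simp
  also have "\<dots> \<le> (real_of_int \<lceil>sqrt (real n)\<rceil>)\<^sup>2" by (intro power_mono) auto
  also have "\<dots> = real ((nat \<lceil>sqrt (real n)\<rceil>)\<^sup>2)" by simp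
  finally show ?thesis by (simp only: of_nat_le_iff)
qed

theorem mainTheorem9:
  fixes T :: fbt and n :: nat
  assumes "n = card (fbt_verts T)"
  shows "burning_number (fbt_verts T) fbt_adj \<le> nat \<lceil>sqrt (real n)\<rceil>"
proof -
  let ?V = "fbt_verts T" and ?W = "fbt_internal T"
  have n: "n = 2 * card ?W + 1" using assms card_fbt_verts by simp
  have n_le: "n \<le> (nat \<lceil>sqrt (real n)\<rceil>)\<^sup>2" by (rule le_ceiling_sqrt_squared)
  with n obtain k where k: "nat \<lceil>sqrt (real n)\<rceil> = Suc k"
    by (cases "nat \<lceil>sqrt (real n)\<rceil>") auto
  with n n_le have "2 * card ?W \<le> k * (k + 2)" by (simp add: power2_eq_square)
  then obtain cs where cs: "length cs = k" "set cs \<subseteq> insert [] ?W" "covers cs ?W"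
    using coverable_if_card_le[OF finite_fbt_internal prefix_closed_fbt_internal]
    unfolding coverable_def by blast
  have "covers (cs @ [[]]) ?V" using cs(3) butlast_in_fbt_internal by (blast intro: covers_snoc_Nil)
  moreover have "set (cs @ [[]]) \<subseteq> ?V"
    using cs(2) fbt_internal_subset_verts Nil_in_fbt_verts by auto
  ultimately have "burning_number ?V fbt_adj \<le> length (cs @ [[]])"
    by (rule burning_number_le_if_covers[OF prefix_closed_fbt_verts, rotated])
  with cs(1) k show ?thesis by simp
qed

end
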